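(* In the setting of the context, suppose there exists $Q^-\in\mathcal L_1^-$ such that $\delta(Q^-,Q^+)=\bot$ for every $Q^+\in\mathcal L_1^+$. Then the only pair $(h_1,h_2)\in\mathbb C(s)^2$ with $\widetilde\gamma_1h_1+\widetilde\gamma_2h_2=0$, $h_1^{\iota_1}=-h_1$ and $h_2^{\iota_2}=-h_2$ is $(0,0)$.
   Context: For a genus-zero weighted quadrant walk model (step set one of the five genus-zero sets, step weights $d_{i,j}>0$, Boltzmann weights $a,b>0$), $A=1-1/a$, $B=1-1/b$. $s\mapsto(x(s),y(s))$ is a fixed rational parametrization by $\mathbb P^1$ of the kernel curve (for a fixed real $t$ transcendental over $\mathbb Q((d_{i,j}),a,b)$), with $x(1/s)=x(s)$, $y(q/s)=y(s)$ for a fixed real $q$ not a root of unity; $\iota_1(s)=1/s$, $\iota_2(s)=q/s$, $\sigma(s)=qs$, $h^\tau=h\circ\tau$. $\widetilde\gamma_1=A/x(s)-td_{1,-1}/y(s)$ and $\widetilde\gamma_2=B/y(s)-td_{-1,1}/x(s)$ have divisors $(\widetilde\gamma_1)=P_1+P_2-0-\infty$, $(\widetilde\gamma_2)=P_3+P_4-0-\infty$, $P_i\notin\{0,\infty\}$. $\mathcal L_1^-=\{P_1,P_2,\iota_2P_3,\iota_2P_4\}$, $\mathcal L_1^+=\{\iota_1P_1,\iota_1P_2,\sigma^{-1}P_3,\sigma^{-1}P_4\}$. For $P,P'\in\mathbb P^1\setminus\{0,\infty\}$, the $\sigma$-distance $\delta(P,P')$ is the unique integer $n$ with $\sigma^nP=P'$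 if it exists, and $\bot$ otherwise. *)

theory Defs
  imports "HOL-Computational_Algebra.Computational_Algebra"
begin

(* The field C(s) of rational functions in one variable s is modelled as complex poly fract. *)
type_synonym ratfun = "complex poly fract"

definition const_rf :: "complex \<Rightarrow> ratfun" where
  "const_rf c = to_fract [:c:]"

definition var_s :: ratfun where
  "var_s = to_fract [:0, 1:]"

definition poly_at_rf :: "complex poly \<Rightarrow> ratfun \<Rightarrow> ratfun" where
  "poly_at_rf p g = (\<Sum>i\<le>degree p. const_rf (coeff p i) * g ^ i)"

(* composition h(g(s)) for a non-constant rational function g (h^tau with tau(s) = g(s)) *)
definition rf_comp :: "ratfun \<Rightarrow> ratfun \<Rightarrow> ratfun" where
  "rf_comp h g = (SOME r. \<exists>p d. d \<noteq> 0 \<and> h = Fract p d \<and> r = poly_at_rf p g / poly_at_rf d g)"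

definition iota1_rf :: "ratfun \<Rightarrow> ratfun" where
  "iota1_rf h = rf_comp h (1 / var_s)"

definition iota2_rf :: "complex \<Rightarrow> ratfun \<Rightarrow> ratfun" where
  "iota2_rf q h = rf_comp h (const_rf q / var_s)"

definition rf_ord :: "complex \<Rightarrow> ratfun \<Rightarrow> int" where
  "rf_ord z f = (SOME k. \<exists>p d. p \<noteq> 0 \<and> d \<noteq> 0 \<and> f = Fract p d \<and>
                   k = int (order z p) - int (order z d))"

definition rf_ord_inf :: "ratfun \<Rightarrow> int" where
  "rf_ord_inf f = (SOME k. \<exists>p d. p \<noteq> 0 \<and> d \<noteq> 0 \<and> f = Fract p d \<and>
                   k = int (degree d) - int (degree p))"

definition divisor_is_PP'_0_inf :: "ratfun \<Rightarrow> complex \<Rightarrow> complex \<Rightarrow> bool" where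
  "divisor_is_PP'_0_inf f P P' \<longleftrightarrow> f \<noteq> 0 \<and>
     (\<forall>z. rf_ord z f = int (count {#P, P'#} z) - (if z = 0 then 1 else 0)) \<and>
     rf_ord_inf f = -1"

(* sigma-distance, sigma(s) = q s; None plays the role of bottom *)
definition sigma_dist :: "complex \<Rightarrow> complex \<Rightarrow> complex \<Rightarrow> int option" where
  "sigma_dist q P P' = (if \<exists>!n::int. q powi n * P = P' then Some (THE n::int. q powi n * P = P') else None)"

(* The five genus-zero step sets (listed up to the symmetry x <-> y, i.e. seven sets):
   {NW, SE} together with a nonempty subset of {N, E, NE}. *)
definition genus_zero_step_sets :: "(int \<times> int) set set" where
  "genus_zero_step_sets = {S. {(-1,1),(1,-1)} \<subseteq> S \<and> S \<subseteq> {(-1,1),(1,-1),(0,1),(1,0),(1,1)}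
                               \<and> S \<noteq> {(-1,1),(1,-1)}}"

definition is_real_subfield :: "real set \<Rightarrow> bool" where
  "is_real_subfield F \<longleftrightarrow> 0 \<in> F \<and> 1 \<in> F \<and> (\<forall>u\<in>F. \<forall>v\<in>F. u + v \<in> F \<and> u * v \<in> F \<and> - u \<in> F)
      \<and> (\<forall>u\<in>F. u \<noteq> 0 \<longrightarrow> inverse u \<in> F)"

definition gen_subfield :: "real set \<Rightarrow> real set" where
  "gen_subfield X = \<Inter>{F. is_real_subfield F \<and> X \<subseteq> F}"

definition transcendental_over :: "real set \<Rightarrow> real \<Rightarrow> bool" where
  "transcendental_over F t \<longleftrightarrow> \<not> (\<exists>p :: real poly. p \<noteq> 0 \<and> (\<forall>i. coeff p i \<in> F) \<and> poly p t = 0)"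

(* the kernel K(x,y,t) = xy (1 - t sum_{(i,j)} d_{i,j} x^i y^j), evaluated at rational functions x, y *)
definition kernel_rf :: "(int \<Rightarrow> int \<Rightarrow> real) \<Rightarrow> real \<Rightarrow> ratfun \<Rightarrow> ratfun \<Rightarrow> ratfun" where
  "kernel_rf d t x y = x * y - const_rf (complex_of_real t) *
      (\<Sum>i\<in>{-1,0,1::int}. \<Sum>j\<in>{-1,0,1::int}.
          const_rf (complex_of_real (d i j)) * x ^ nat (i + 1) * y ^ nat (j + 1))"

(* s -> (x(s), y(s)) is generically injective on P^1 (so, being a parametrization of the
   kernel curve, it is birational onto it) *)
definition generically_injective :: "ratfun \<Rightarrow> ratfun \<Rightarrow> bool" where
  "generically_injective x y \<longleftrightarrow> (\<exists>p1 d1 p2 d2 (F :: complex set).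
      d1 \<noteq> 0 \<and> d2 \<noteq> 0 \<and> x = Fract p1 d1 \<and> y = Fract p2 d2 \<and> finite F \<and>
      (\<forall>z. z \<notin> F \<longrightarrow> poly d1 z \<noteq> 0 \<and> poly d2 z \<noteq> 0) \<and>
      inj_on (\<lambda>z. (poly p1 z / poly d1 z, poly p2 z / poly d2 z)) (- F))"

end

theory Submission
  imports Defs
begin

(* Everything is read off from orders of zeros and poles at points z <> 0.  Comparing orders in
   gamma1 h1 = - gamma2 h2 gives [P1 + P2](z) + ord_z h1 = [P3 + P4](z) + ord_z h2, and the symmetries of h1, h2
   give ord_z h1 = ord_(1/z) h1 and ord_z h2 = ord_(q/z) h2.  Hence along the q-orbit of Q^- the
   function F(n) = ord_(q^n Q^-) h2 satisfies
     F(n+1) = F(n) - [P1 + P2](q^n Q^-) - [P3 + P4](1 / (q^n Q^-)),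
   the other two terms vanishing because the orbit never meets L_1^+.  So F is nonincreasing with
   finite support, hence identically zero; but Q^- in L_1^- makes F drop at n = 0 or n = -1. *)

lemma const_rf_mult: "const_rf a * const_rf b = const_rf (a * b)"
  by (simp add: const_rf_def flip: to_fract_mult)

lemma const_rf_1: "const_rf 1 = 1"
  by (metis const_rf_def pCons_one to_fract_1)

lemma const_rf_power: "const_rf a ^ n = const_rf (a ^ n)"
  by (induct n) (simp_all add: const_rf_mult const_rf_1)

lemma var_s_nonzero: "var_s \<noteq> 0"
  by (simp add: var_s_def)

lemma to_fract_power: "to_fract (x ^ n) = to_fract x ^ n"
  by (induct n) simp_all

lemma to_fract_conv_sum:
  assumes "degree p \<le> N"
  shows "to_fract p = (\<Sum>j\<le>N. const_rf (coeff p j) * var_s ^ j)"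
proof -
  have "monom (coeff p j) j = [:coeff p j:] * [:0, 1:] ^ j" for j
    by (simp add: monom_altdef)
  then have "to_fract (monom (coeff p j) j) = const_rf (coeff p j) * var_s ^ j" for j
    by (simp only: const_rf_def var_s_def to_fract_mult to_fract_power)
  moreover have "to_fract p = (\<Sum>j\<le>N. to_fract (monom (coeff p j) j))"
    using arg_cong[OF poly_as_sum_of_monoms'[OF assms], of to_fract] by (simp only: to_fract_sum)
  ultimately show ?thesis
    by simp
qed

text \<open>\<open>recip_poly c p\<close> is \<open>p(c/s)\<close> with its denominator \<open>s ^ degree p\<close> cleared.\<close>

definition recip_poly :: "complex \<Rightarrow> complex poly \<Rightarrow> complex poly" where
  "recip_poly c p = reflect_poly (pcompose p [:0, c:])"

lemma degree_pcompose_scale: "(c::complex) \<noteq> 0 \<Longrightarrow> degree (pcompose p [:0, c:]) = degree p"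
  by (subst degree_pcompose) (simp add: degree_pCons_eq)

lemma recip_poly_1: "recip_poly c 1 = 1"
  by (simp add: recip_poly_def pcompose_1)

lemma recip_poly_mult: "recip_poly c (p * p') = recip_poly c p * recip_poly c p'"
  by (simp add: recip_poly_def pcompose_mult reflect_poly_mult)

lemma recip_poly_power: "recip_poly c (p ^ n) = recip_poly c p ^ n"
  by (induct n) (simp_all add: recip_poly_1 recip_poly_mult)

lemma recip_poly_eq_0_iff: "c \<noteq> 0 \<Longrightarrow> recip_poly c p = 0 \<longleftrightarrow> p = 0"
  by (simp add: recip_poly_def pcompose_eq_0_iff degree_pCons_eq)

lemma recip_poly_linear: "z \<noteq> 0 \<Longrightarrow> recip_poly c [:- (c / z), 1:] = smult (- (c / z)) [:- z, 1:]"
  by (intro poly_eqI)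
     (auto simp: recip_poly_def pcompose_pCons coeff_reflect_poly coeff_pCons split: nat.splits)

lemma poly_recip_poly:
  "z \<noteq> 0 \<Longrightarrow> poly (recip_poly c p) z = z ^ degree (pcompose p [:0, c:]) * poly p (c / z)"
  by (simp add: recip_poly_def poly_reflect_poly_nz poly_pcompose field_simps)

lemma order_recip_poly:
  assumes c: "c \<noteq> 0" and z: "z \<noteq> 0" and p: "p \<noteq> 0"
  shows "order z (recip_poly c p) = order (c / z) p"
proof -
  define w where "w = c / z"
  define k where "k = order w p"
  have w: "w \<noteq> 0" using c z by (simp add: w_def)
  obtain u where u: "p = [:- w, 1:] ^ k * u" "\<not> [:- w, 1:] dvd u"
    using order_decomp[OF p] unfolding k_def by blast
  have "u \<noteq> 0" using u p by auto
  have linear: "recip_poly c [:- w, 1:] = smult (- w) [:- z, 1:]"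
    using recip_poly_linear[OF z] by (simp add: w_def)
  have "recip_poly c p = recip_poly c [:- w, 1:] ^ k * recip_poly c u"
    by (subst u(1)) (simp only: recip_poly_mult recip_poly_power)
  also have "\<dots> = smult ((- w) ^ k) ([:- z, 1:] ^ k * recip_poly c u)"
    by (simp only: linear smult_power mult_smult_left)
  finally have factored: "recip_poly c p = smult ((- w) ^ k) ([:- z, 1:] ^ k * recip_poly c u)" .
  have "order z (recip_poly c u) = 0"
    using u(2) z by (intro order_0I) (simp add: poly_recip_poly poly_eq_0_iff_dvd flip: w_def)
  moreover have "recip_poly c u \<noteq> 0" using \<open>u \<noteq> 0\<close> c by (simp add: recip_poly_eq_0_iff)
  ultimately show ?thesis
    using w by (simp add: factored order_mult order_smult order_power_n_n k_def flip: w_def)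
qed

lemma poly_at_rf_recip:
  assumes c: "c \<noteq> 0"
  shows "poly_at_rf p (const_rf c / var_s) = to_fract (recip_poly c p) / var_s ^ degree p"
proof -
  let ?n = "degree p"
  have "poly_at_rf p (const_rf c / var_s) * var_s ^ ?n
      = (\<Sum>i\<le>?n. const_rf (coeff p i) * (const_rf c / var_s) ^ i * var_s ^ ?n)"
    by (simp add: poly_at_rf_def sum_distrib_right)
  also have "\<dots> = (\<Sum>i\<le>?n. const_rf (c ^ i * coeff p i) * var_s ^ (?n - i))"
  proof (rule sum.cong)
    fix i assume "i \<in> {..?n}"
    then have "var_s ^ ?n = var_s ^ i * var_s ^ (?n - i)"
      by (simp flip: power_add)
    then show "const_rf (coeff p i) * (const_rf c / var_s) ^ i * var_s ^ ?n
        = const_rf (c ^ i * coeff p i) * var_s ^ (?n - i)"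
      using var_s_nonzero by (simp add: power_divide const_rf_power flip: const_rf_mult)
  qed simp
  also have "\<dots> = (\<Sum>j\<le>?n. const_rf (coeff (recip_poly c p) j) * var_s ^ j)"
    by (rule sum.reindex_bij_witness[where i="\<lambda>j. ?n - j" and j="\<lambda>i. ?n - i"])
       (auto simp: recip_poly_def coeff_reflect_poly degree_pcompose_scale[OF c]
          coeff_pcompose_linear)
  also have "\<dots> = to_fract (recip_poly c p)"
    by (rule to_fract_conv_sum[symmetric])
       (metis recip_poly_def degree_pcompose_scale[OF c] degree_reflect_poly_le)
  finally show ?thesis
    using var_s_nonzero by (simp add: field_simps)
qed

lemma poly_at_rf_recip_mult:
  "c \<noteq> 0 \<Longrightarrow> poly_at_rf (p * p') (const_rf c / var_s)
     = poly_at_rf p (const_rf c / var_s) * poly_at_rf p' (const_rf c / var_s)"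
  by (cases "p = 0 \<or> p' = 0")
     (auto simp: poly_at_rf_recip recip_poly_mult degree_mult_eq power_add recip_poly_eq_0_iff)

lemma poly_at_rf_recip_nonzero:
  "c \<noteq> 0 \<Longrightarrow> p \<noteq> 0 \<Longrightarrow> poly_at_rf p (const_rf c / var_s) \<noteq> 0"
  by (simp add: poly_at_rf_recip recip_poly_eq_0_iff var_s_nonzero)

lemma rf_comp_Fract:
  assumes mult: "\<And>p p'. poly_at_rf (p * p') g = poly_at_rf p g * poly_at_rf p' g"
    and nonzero: "\<And>p. p \<noteq> 0 \<Longrightarrow> poly_at_rf p g \<noteq> 0"
    and d: "d \<noteq> 0"
  shows "rf_comp (Fract p d) g = poly_at_rf p g / poly_at_rf d g"
  unfolding rf_comp_def
proof (rule some_equality)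
  fix r
  assume "\<exists>p' d'. d' \<noteq> 0 \<and> Fract p d = Fract p' d' \<and> r = poly_at_rf p' g / poly_at_rf d' g"
  then obtain p' d' where d': "d' \<noteq> 0" and "Fract p d = Fract p' d'"
    and r: "r = poly_at_rf p' g / poly_at_rf d' g"
    by blast
  then have "p * d' = p' * d" using d by (simp add: eq_fract)
  then have "poly_at_rf p g * poly_at_rf d' g = poly_at_rf p' g * poly_at_rf d g"
    by (metis mult)
  then show "r = poly_at_rf p g / poly_at_rf d g"
    using r nonzero[OF d] nonzero[OF d'] by (simp add: frac_eq_eq)
qed (use d in blast)

lemma rf_ord_Fract:
  assumes "p \<noteq> 0" "d \<noteq> 0"
  shows "rf_ord z (Fract p d) = int (order z p) - int (order z d)"
proof -
  have "k = int (order z p) - int (order z d)"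
    if "p' \<noteq> 0" "d' \<noteq> 0" "Fract p d = Fract p' d'" "k = int (order z p') - int (order z d')"
    for k p' d'
  proof -
    from that assms have "order z (p * d') = order z (p' * d)"
      by (simp add: eq_fract)
    then show ?thesis using that assms by (simp add: order_mult)
  qed
  then show ?thesis
    unfolding rf_ord_def using assms by (intro some_equality) blast+
qed

lemma rf_ord_mult:
  assumes "f \<noteq> 0" "g \<noteq> 0"
  shows "rf_ord z (f * g) = rf_ord z f + rf_ord z g"
proof -
  obtain p d where f: "f = Fract p d" "d \<noteq> 0" by (cases f)
  obtain p' d' where g: "g = Fract p' d'" "d' \<noteq> 0" by (cases g)
  have "p \<noteq> 0" "p' \<noteq> 0" using f g assms by (auto simp: fract_collapse)
  then show ?thesis using f g by (simp add: rf_ord_Fract order_mult)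
qed

lemma rf_ord_uminus: "rf_ord z (- f) = rf_ord z f"
proof -
  obtain p d where f: "f = Fract p d" "d \<noteq> 0" by (cases f)
  show ?thesis
    using f by (cases "p = 0") (simp_all add: rf_ord_Fract fract_collapse)
qed

lemma finite_rf_ord_nonzero: "f \<noteq> 0 \<Longrightarrow> finite {z. rf_ord z f \<noteq> 0}"
proof -
  assume "f \<noteq> 0"
  obtain p d where f: "f = Fract p d" "d \<noteq> 0" by (cases f)
  have p: "p \<noteq> 0" using f \<open>f \<noteq> 0\<close> by (auto simp: fract_collapse)
  have "{z. rf_ord z f \<noteq> 0} \<subseteq> {z. poly (p * d) z = 0}"
    using f p by (auto simp: rf_ord_Fract order_0I order_gt_0_iff)
  moreover have "finite {z. poly (p * d) z = 0}"
    using p f by (intro poly_roots_finite) simp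
  ultimately show ?thesis by (rule finite_subset)
qed

lemma rf_ord_rf_comp_recip:
  assumes c: "c \<noteq> 0" and z: "z \<noteq> 0" and h: "h \<noteq> 0"
  shows "rf_ord z (rf_comp h (const_rf c / var_s)) = rf_ord (c / z) h"
proof -
  obtain p d where h_eq: "h = Fract p d" and d: "d \<noteq> 0" by (cases h)
  have p: "p \<noteq> 0" using h_eq h by (auto simp: fract_collapse)
  have "rf_comp h (const_rf c / var_s)
      = poly_at_rf p (const_rf c / var_s) / poly_at_rf d (const_rf c / var_s)"
    unfolding h_eq
    by (rule rf_comp_Fract[OF poly_at_rf_recip_mult[OF c] poly_at_rf_recip_nonzero[OF c] d])
  also have "\<dots> = Fract (recip_poly c p * [:0, 1:] ^ degree d) (recip_poly c d * [:0, 1:] ^ degree p)"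
    using d var_s_nonzero recip_poly_eq_0_iff[OF c, of d] unfolding poly_at_rf_recip[OF c]
    by (simp add: Fract_conv_to_fract to_fract_power var_s_def field_simps)
  moreover have "order z ([:0, 1:] ^ n) = 0" for n
    using z by (intro order_0I) simp
  ultimately show ?thesis
    using p d c z by (simp add: rf_ord_Fract order_mult order_recip_poly recip_poly_eq_0_iff h_eq)
qed

lemma iota1_rf_eq_iota2_rf: "iota1_rf h = iota2_rf 1 h"
  by (simp add: iota1_rf_def iota2_rf_def const_rf_1)

lemma rf_ord_iota2_rf:
  "c \<noteq> 0 \<Longrightarrow> z \<noteq> 0 \<Longrightarrow> h \<noteq> 0 \<Longrightarrow> rf_ord z (iota2_rf c h) = rf_ord (c / z) h"
  by (simp add: iota2_rf_def rf_ord_rf_comp_recip)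

lemma rf_ord_divisor_is_PP'_0_inf:
  "divisor_is_PP'_0_inf f P P' \<Longrightarrow> z \<noteq> 0 \<Longrightarrow> rf_ord z f = int (count {#P, P'#} z)"
  by (simp add: divisor_is_PP'_0_inf_def)

lemma divisor_is_PP'_0_inf_nonzero: "divisor_is_PP'_0_inf f P P' \<Longrightarrow> f \<noteq> 0"
  by (simp add: divisor_is_PP'_0_inf_def)

lemma rf_ord_balance:
  assumes f: "divisor_is_PP'_0_inf f P1 P2" and g: "divisor_is_PP'_0_inf g P3 P4"
    and eq: "f * h1 + g * h2 = 0" and h: "h1 \<noteq> 0" "h2 \<noteq> 0" and z: "z \<noteq> 0"
  shows "int (count {#P1, P2#} z) + rf_ord z h1 = int (count {#P3, P4#} z) + rf_ord z h2"
proof -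
  have "f * h1 = - (g * h2)"
    using eq by (simp add: eq_neg_iff_add_eq_0)
  then have "rf_ord z (f * h1) = rf_ord z (g * h2)"
    by (simp add: rf_ord_uminus)
  then show ?thesis
    using f g h z divisor_is_PP'_0_inf_nonzero[OF f] divisor_is_PP'_0_inf_nonzero[OF g]
    by (simp add: rf_ord_mult rf_ord_divisor_is_PP'_0_inf)
qed

lemma inj_power_int:
  fixes q :: "'a::field"
  assumes q: "q \<noteq> 0" and not_root: "\<And>n::nat. n > 0 \<Longrightarrow> q ^ n \<noteq> 1"
  shows "inj (power_int q)"
proof -
  have "q powi m \<noteq> q powi n" if "m < n" for m n
  proof
    assume "q powi m = q powi n"
    then have "q ^ nat (n - m) = 1"
      using q that by (simp add: power_int_diff flip: power_int_nonneg_exp)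
    then show False using not_root that by simp
  qed
  then show ?thesis
    by (metis injI linorder_neqE)
qed

lemma sigma_dist_eq_None_iff:
  assumes q: "q \<noteq> 0" "\<And>n::nat. n > 0 \<Longrightarrow> q ^ n \<noteq> 1" and Q: "Q \<noteq> 0"
  shows "sigma_dist q Q P = None \<longleftrightarrow> (\<forall>n. q powi n * Q \<noteq> P)"
proof -
  have "inj (\<lambda>n. q powi n * Q)"
    using inj_power_int[OF q] Q by (simp add: inj_def)
  then have "(\<exists>!n. q powi n * Q = P) \<longleftrightarrow> (\<exists>n. q powi n * Q = P)"
    by (auto dest: injD)
  then show ?thesis by (simp add: sigma_dist_def)
qed

lemma nonincreasing_finite_support_eq_0:
  fixes F :: "int \<Rightarrow> 'a::{order, zero}"
  assumes antitone_step: "\<And>n. F (n + 1) \<le> F n" and fin: "finite {n. F n \<noteq> 0}"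
  shows "F n = 0"
proof -
  have antimono: "F m \<le> F k" if "k \<le> m" for k m
    using that
  proof (induction m rule: int_ge_induct)
    case (step m)
    show ?case using order_trans[OF antitone_step step.IH] .
  qed simp
  obtain k where "k \<le> n" "F k = 0"
    using fin infinite_Iic[of n] by (metis (mono_tags) finite_subset mem_Collect_eq subsetI atMost_iff)
  moreover obtain m where "n \<le> m" "F m = 0"
    using fin infinite_Ici[of n] by (metis (mono_tags) finite_subset mem_Collect_eq subsetI atLeast_iff)
  ultimately show ?thesis
    using antimono by (metis order.antisym)
qed

lemma orbit_order_step:
  fixes u v :: "complex \<Rightarrow> int" and D E :: "complex multiset"
  assumes balance: "\<And>z. z \<noteq> 0 \<Longrightarrow> int (count D z) + u z = int (count E z) + v z"
    and u_sym: "\<And>z. z \<noteq> 0 \<Longrightarrow> u (1 / z) = u z"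
    and v_sym: "\<And>z. z \<noteq> 0 \<Longrightarrow> v (q / z) = v z"
    and z: "z \<noteq> 0"
  shows "v (q * z) = v z + count E z - count D z + count D (1 / z) - count E (1 / z)"
proof -
  have "v (q * z) = v (1 / z)"
    using v_sym[of "1 / z"] z by simp
  then show ?thesis
    using balance[OF z] balance[of "1 / z"] u_sym[OF z] z by simp
qed

lemma orbit_divisor_obstruction:
  fixes q Q :: complex and u v :: "complex \<Rightarrow> int" and D E :: "complex multiset"
  assumes q: "q \<noteq> 0" "\<And>n::nat. n > 0 \<Longrightarrow> q ^ n \<noteq> 1"
    and balance: "\<And>z. z \<noteq> 0 \<Longrightarrow> int (count D z) + u z = int (count E z) + v z"
    and u_sym: "\<And>z. z \<noteq> 0 \<Longrightarrow> u (1 / z) = u z"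
    and v_sym: "\<And>z. z \<noteq> 0 \<Longrightarrow> v (q / z) = v z"
    and v_fin: "finite {z. v z \<noteq> 0}"
    and Q: "Q \<noteq> 0" "Q \<in># D \<or> (\<exists>P \<in># E. Q = q / P)"
    and unmatched_D: "\<And>P. P \<in># D \<Longrightarrow> sigma_dist q Q (1 / P) = None"
    and unmatched_E: "\<And>P. P \<in># E \<Longrightarrow> sigma_dist q Q (P / q) = None"
  shows False
proof -
  have orbit_avoids_D: "q powi n * Q \<noteq> 1 / P" if "P \<in># D" for n P
    using unmatched_D[OF that] by (simp add: sigma_dist_eq_None_iff[OF q Q(1)])
  have orbit_avoids_E: "q powi n * Q \<noteq> P / q" if "P \<in># E" for n P
    using unmatched_E[OF that] by (simp add: sigma_dist_eq_None_iff[OF q Q(1)])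
  define F where "F n = v (q powi n * Q)" for n
  have F_step: "F (n + 1) = F n - count D (q powi n * Q) - count E (1 / (q powi n * Q))" for n
  proof -
    define z where "z = q powi n * Q"
    have z: "z \<noteq> 0" using q Q by (simp add: z_def)
    have "count D (1 / z) = 0"
      using orbit_avoids_D[of "1 / z" n] by (auto simp: z_def count_eq_zero_iff)
    moreover have "count E z = 0"
      using orbit_avoids_E[of z "n - 1"] q by (auto simp: z_def power_int_diff count_eq_zero_iff)
    moreover have "F (n + 1) = v (q * z)"
      using q by (simp add: F_def z_def power_int_add_1' mult.assoc)
    ultimately show ?thesis
      using orbit_order_step[OF balance u_sym v_sym z] by (simp add: F_def z_def)
  qed
  have "inj (\<lambda>n. q powi n * Q)"
    using inj_power_int[OF q] Q by (simp add: inj_def)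
  then have "finite {n. F n \<noteq> 0}"
    using finite_vimageI[OF v_fin] by (simp add: F_def vimage_def)
  then have "F n = 0" for n
    using F_step by (intro nonincreasing_finite_support_eq_0) auto
  then have no_hit: "count D (q powi n * Q) = 0 \<and> count E (1 / (q powi n * Q)) = 0" for n
    using F_step[of n] by simp
  show False
    using Q no_hit[of 0] no_hit[of "-1"] q by (auto simp: power_int_minus count_eq_zero_iff)
qed

theorem lemma3p12:
  fixes S :: "(int \<times> int) set" and d :: "int \<Rightarrow> int \<Rightarrow> real"
    and a b t q :: real and x y h1 h2 :: ratfun and P1 P2 P3 P4 :: complex
  assumes steps: "S \<in> genus_zero_step_sets"
    and weights_pos: "\<forall>i j. (i, j) \<in> S \<longrightarrow> d i j > 0"
    and weights_zero: "\<forall>i j. (i, j) \<notin> S \<longrightarrow> d i j = 0"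
    and ab: "a > 0" "b > 0"
    and t_transc: "transcendental_over (gen_subfield ({a, b} \<union> {d i j | i j. (i, j) \<in> S})) t"
    and q_nz: "q \<noteq> 0" and q_not_root: "\<forall>n::nat. n > 0 \<longrightarrow> q ^ n \<noteq> 1"
    and param: "kernel_rf d t x y = 0" "generically_injective x y"
    and x_inv: "iota1_rf x = x"
    and y_inv: "iota2_rf (complex_of_real q) y = y"
    and div1: "divisor_is_PP'_0_inf
                 (const_rf (complex_of_real (1 - 1 / a)) / x - const_rf (complex_of_real (t * d 1 (-1))) / y)
                 P1 P2"
    and div2: "divisor_is_PP'_0_inf
                 (const_rf (complex_of_real (1 - 1 / b)) / y - const_rf (complex_of_real (t * d (-1) 1)) / x)
                 P3 P4"
    and P_nz: "P1 \<noteq> 0" "P2 \<noteq> 0" "P3 \<noteq> 0" "P4 \<noteq> 0"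
    and no_match: "\<exists>Qm \<in> {P1, P2, complex_of_real q / P3, complex_of_real q / P4}.
                     \<forall>Qp \<in> {1 / P1, 1 / P2, P3 / complex_of_real q, P4 / complex_of_real q}.
                       sigma_dist (complex_of_real q) Qm Qp = None"
    and eq: "(const_rf (complex_of_real (1 - 1 / a)) / x - const_rf (complex_of_real (t * d 1 (-1))) / y) * h1
           + (const_rf (complex_of_real (1 - 1 / b)) / y - const_rf (complex_of_real (t * d (-1) 1)) / x) * h2 = 0"
    and h1_anti: "iota1_rf h1 = - h1"
    and h2_anti: "iota2_rf (complex_of_real q) h2 = - h2"
  shows "h1 = 0 \<and> h2 = 0"
proof (rule ccontr)
  assume nontrivial: "\<not> (h1 = 0 \<and> h2 = 0)"
  have "h1 \<noteq> 0 \<and> h2 \<noteq> 0" if "f \<noteq> 0" "g \<noteq> 0" "f * h1 + g * h2 = 0" for f g :: ratfun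
    using that nontrivial by auto
  then have h: "h1 \<noteq> 0" "h2 \<noteq> 0"
    using eq divisor_is_PP'_0_inf_nonzero[OF div1] divisor_is_PP'_0_inf_nonzero[OF div2] by blast+
  define qc where "qc = complex_of_real q"
  have qc: "qc \<noteq> 0" "\<And>n::nat. n > 0 \<Longrightarrow> qc ^ n \<noteq> 1"
    using q_nz q_not_root by (simp_all add: qc_def flip: of_real_power)
  obtain Qm where Qm: "Qm \<in> {P1, P2, qc / P3, qc / P4}"
    and unmatched: "\<forall>Qp \<in> {1 / P1, 1 / P2, P3 / qc, P4 / qc}. sigma_dist qc Qm Qp = None"
    using no_match unfolding qc_def by blast
  have "Qm \<noteq> 0" using Qm P_nz qc by auto
  show False
  proof (rule orbit_divisor_obstruction[where q = qc and u = "\<lambda>z. rf_ord z h1" and v = "\<lambda>z. rf_ord z h2"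
        and D = "{#P1, P2#}" and E = "{#P3, P4#}" and Q = Qm])
    show "int (count {#P1, P2#} z) + rf_ord z h1 = int (count {#P3, P4#} z) + rf_ord z h2"
      if "z \<noteq> 0" for z
      using rf_ord_balance[OF div1 div2 eq h that] .
    show "rf_ord (1 / z) h1 = rf_ord z h1" if "z \<noteq> 0" for z
      using rf_ord_iota2_rf[of 1 "1 / z" h1] h1_anti h that
      by (simp add: rf_ord_uminus flip: iota1_rf_eq_iota2_rf)
    show "rf_ord (qc / z) h2 = rf_ord z h2" if "z \<noteq> 0" for z
      using rf_ord_iota2_rf[of qc "qc / z" h2] h2_anti h that qc
      by (simp add: rf_ord_uminus qc_def)
    show "finite {z. rf_ord z h2 \<noteq> 0}"
      using h(2) by (rule finite_rf_ord_nonzero)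
    show "Qm \<in># {#P1, P2#} \<or> (\<exists>P \<in># {#P3, P4#}. Qm = qc / P)"
      using Qm by auto
    show "sigma_dist qc Qm (1 / P) = None" if "P \<in># {#P1, P2#}" for P
      using unmatched that by auto
    show "sigma_dist qc Qm (P / qc) = None" if "P \<in># {#P3, P4#}" for P
      using unmatched that by auto
  qed (use qc \<open>Qm \<noteq> 0\<close> in auto)
qed

end
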